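(* Let $q$ be a prime power, $1\le \ell\le m$, $V=\mathbb F_q^m$, and let $C(\ell,m)$, $\tau$, $n$ and $g(\cdot)$ be as defined below. Let $D$ be a subspace of $C(\ell,m)$ with $s=\dim D$, and let $\mathcal D=\tau^{-1}(D)\subseteq\bigwedge^{m-\ell}V$. Then $\mathcal E:=\{\omega'\in\bigwedge^{\ell}V:\omega'\wedge\omega=0\text{ for all }\omega\in\mathcal D\}$ is a subspace of $\bigwedge^{\ell}V$ of codimension $s$, and $\|D\|=n-g(\mathcal E)$.
   Context: Fix a basis $e_1,\dots,e_m$ of $V$ and identify $\bigwedge^mV$ with $\mathbb F_q$ via $e_1\wedge\cdots\wedge e_m=1$. Let $n=\left[{m\atop \ell}\right]_q$ be the number of $\ell$-dimensional subspaces of $V$, and fix representatives $\omega'_1,\dots,\omega'_n\in\bigwedge^{\ell}V$, where $\omega'_i=v_1\wedge\cdots\wedge v_\ell$ for a basis $v_1,\dots,v_\ell$ of the $i$-th $\ell$-dimensional subspace; let $T(\ell,m)=\{\omega'_1,\dots,\omega'_n\}$. $\tau:\bigwedge^{m-\ell}V\to\mathbb F_q^n$, $\tau(\omega)=(\omega'_1\wedge\omega,\dots,\omega'_n\wedge\omega)$, is injective, and $C(\ell,m)=\tau(\bigwedge^{m-\ell}V)$. For a subspace $\mathcal E$ of $\bigwedge^{\ell}V$, $g(\mathcal E)=|\mathcal E\cap T(\ell,m)|$. For $D\subseteq\mathbb F_q^n$, $\|D\|$ is the number of coordinates $i$ such that $x_i\ne0$ for some $x\in D$. *)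

theory Defs
  imports Complex_Main "HOL-Library.Function_Algebras"
begin

text \<open>Vectors of V = F_q^m are functions nat => F supported on {..<m};
  vectors of F_q^n likewise supported on {..<n};
  elements of the exterior algebra of V are functions (nat set => F),
  the value at I being the coefficient of e_I (I a subset of {..<m}).\<close>

definition fscale :: "'a::field \<Rightarrow> ('b \<Rightarrow> 'a) \<Rightarrow> ('b \<Rightarrow> 'a)" where
  "fscale c f = (\<lambda>x. c * f x)"

lemma vector_space_fscale: "vector_space (fscale :: 'a::field \<Rightarrow> ('b \<Rightarrow> 'a) \<Rightarrow> ('b \<Rightarrow> 'a))"
  unfolding vector_space_def fscale_def by (auto simp: algebra_simps fun_eq_iff)

text \<open>V = F^m (basis e_1..e_m is the standard basis, 0-indexed here).\<close>
definition Vsp :: "nat \<Rightarrow> (nat \<Rightarrow> 'a::field) set" where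
  "Vsp m = {v. \<forall>i. m \<le> i \<longrightarrow> v i = 0}"

definition ext_pow :: "nat \<Rightarrow> nat \<Rightarrow> (nat set \<Rightarrow> 'a::field) set" where
  "ext_pow m k = {w. \<forall>I. w I \<noteq> 0 \<longrightarrow> I \<subseteq> {..<m} \<and> card I = k}"

text \<open>Sign with e_I wedge e_J = ext_sign I J * e_(I union J) for disjoint I, J.\<close>
definition ext_sign :: "nat set \<Rightarrow> nat set \<Rightarrow> 'a::field" where
  "ext_sign I J = (-1) ^ card {(i, j). i \<in> I \<and> j \<in> J \<and> j < i}"

definition wedge :: "(nat set \<Rightarrow> 'a::field) \<Rightarrow> (nat set \<Rightarrow> 'a) \<Rightarrow> (nat set \<Rightarrow> 'a)" where
  "wedge \<alpha> \<beta> = (\<lambda>K. if finite K then (\<Sum>I\<in>Pow K. ext_sign I (K - I) * \<alpha> I * \<beta> (K - I)) else 0)"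

definition vec_ext :: "(nat \<Rightarrow> 'a::field) \<Rightarrow> (nat set \<Rightarrow> 'a)" where
  "vec_ext v = (\<lambda>I. if card I = 1 then v (the_elem I) else 0)"

fun wedge_list :: "(nat \<Rightarrow> 'a::field) list \<Rightarrow> (nat set \<Rightarrow> 'a)" where
  "wedge_list [] = (\<lambda>I. if I = {} then 1 else 0)"
| "wedge_list (v # vs) = wedge (vec_ext v) (wedge_list vs)"

text \<open>Identification of the top exterior power with F via e_1 wedge ... wedge e_m = 1.\<close>
definition top_coeff :: "nat \<Rightarrow> (nat set \<Rightarrow> 'a::field) \<Rightarrow> 'a" where
  "top_coeff m w = w {..<m}"

definition tau :: "nat \<Rightarrow> nat \<Rightarrow> (nat \<Rightarrow> nat set \<Rightarrow> 'a::field) \<Rightarrow> (nat set \<Rightarrow> 'a) \<Rightarrow> (nat \<Rightarrow> 'a)" where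
  "tau m n rep \<omega> = (\<lambda>i. if i < n then top_coeff m (wedge (rep i) \<omega>) else 0)"

definition supp_size :: "nat \<Rightarrow> (nat \<Rightarrow> 'a::zero) set \<Rightarrow> nat" where
  "supp_size n D = card {i \<in> {..<n}. \<exists>x\<in>D. x i \<noteq> 0}"

end

theory Submission
  imports Defs
begin

text \<open>The top-degree pairing \<open>\<langle>\<alpha>, \<beta>\<rangle> = \<alpha> \<and> \<beta>\<close> of \<open>\<Lambda>\<^sup>l V\<close> with \<open>\<Lambda>\<^sup>m\<^sup>-\<^sup>l V\<close> is perfect:
  it pairs the basis vector \<open>e_I\<close> with \<open>\<plusminus>1\<close> times the coordinate of the complement of \<open>I\<close>.
  Hence the annihilator \<open>\<E>\<close> of \<open>\<D>\<close> has codimension \<open>dim \<D>\<close>. Among the \<open>\<omega>'_i\<close> are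
  nonzero multiples of every \<open>e_I\<close> (the representatives of the coordinate subspaces), so by
  perfectness \<open>\<tau>\<close> is injective and \<open>dim \<D> = dim D\<close>. Finally, coordinate \<open>i\<close> vanishes on \<open>D\<close>
  iff \<open>\<omega>'_i \<in> \<E>\<close>, and distinct subspaces have distinct representatives (the subspace is
  the kernel of \<open>v \<mapsto> v \<and> \<omega>'_i\<close>), so counting coordinates gives \<open>\<parallel>D\<parallel> = n - g(\<E>)\<close>.
  The codimension count is a row-rank-equals-column-rank argument, carried out in spaces of
  functions, which are not finite-dimensional as a whole.\<close>

section \<open>Dimension counting in spaces of functions\<close>

interpretation fs: vector_space "fscale :: 'a::field \<Rightarrow> ('b \<Rightarrow> 'a) \<Rightarrow> ('b \<Rightarrow> 'a)"
  by (rule vector_space_fscale)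

lemma fscale_apply: "fscale c f x = c * f x"
  by (simp add: fscale_def)

lemma sum_fun_apply: "(\<Sum>a\<in>A. f a) x = (\<Sum>a\<in>A. f a x)"
  by (induction A rule: infinite_finite_induct) auto

lemma linear_fscaleI:
  assumes "\<And>x y. f (x + y) = f x + f y" and "\<And>c x. f (fscale c x) = fscale c (f x)"
  shows "Vector_Spaces.linear fscale fscale f"
  unfolding Vector_Spaces.linear_iff by (intro conjI vector_space_fscale allI assms)

lemma span_Int_span_disjoint:
  assumes "fs.independent B" "C \<subseteq> B" "K \<subseteq> B" "C \<inter> K = {}"
  shows "fs.span C \<inter> fs.span K = {0}"
proof safe
  fix x assume x: "x \<in> fs.span C" "x \<in> fs.span K"
  have rC: "fs.representation B x = fs.representation C x"
    by (rule fs.representation_extend) (use assms x in auto)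
  have rK: "fs.representation B x = fs.representation K x"
    by (rule fs.representation_extend) (use assms x in auto)
  have "fs.representation B x b = 0" for b
    using rC rK fs.representation_ne_zero[of C x b] fs.representation_ne_zero[of K x b] assms(4)
    by auto
  moreover have "x \<in> fs.span B" using assms(2) x(1) fs.span_mono by blast
  ultimately show "x = 0"
    using fs.sum_nonzero_representation_eq[OF assms(1), of x] by simp
qed (simp_all add: fs.span_zero)

lemma dim_kernel_add_dim_image:
  assumes f: "Vector_Spaces.linear fscale fscale f" and S: "fs.subspace S"
    and B: "finite B" "S \<subseteq> fs.span B"
  shows "fs.dim S = fs.dim {x\<in>S. f x = 0} + fs.dim (f ` S)"
proof -
  interpret f: Vector_Spaces.linear fscale fscale f by (rule f)
  define K where "K = {x\<in>S. f x = 0}"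
  obtain BK where BK: "BK \<subseteq> K" "fs.independent BK" "K \<subseteq> fs.span BK" "card BK = fs.dim K"
    by (rule fs.basis_exists)
  have "BK \<subseteq> S" using BK(1) K_def by auto
  then obtain BS where BS: "BK \<subseteq> BS" "BS \<subseteq> S" "fs.independent BS" "S \<subseteq> fs.span BS"
    using fs.maximal_independent_subset_extend BK(2) by blast
  have finBS: "finite BS" using fs.independent_span_bound[OF B(1) BS(3)] BS(2) B(2) by auto
  define C where "C = BS - BK"
  have cardBS: "card BS = card BK + card C"
    using card_Diff_subset[OF finite_subset[OF BS(1) finBS] BS(1)] card_mono[OF finBS BS(1)]
    unfolding C_def by simp
  have spanC: "fs.span C \<subseteq> S" using fs.span_minimal[of C S] S BS(2) C_def by auto
  have inj: "inj_on f (fs.span C)"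
    unfolding f.inj_on_iff_eq_0[OF fs.subspace_span]
  proof safe
    fix x assume x: "x \<in> fs.span C" "f x = 0"
    then have "x \<in> fs.span BK" using spanC BK(3) K_def by auto
    then show "x = 0" using span_Int_span_disjoint[OF BS(3), of C BK] x C_def BS(1) by auto
  qed
  have "f ` S = f ` fs.span C"
  proof
    have "f ` S \<subseteq> f ` fs.span BS" using BS(4) by (rule image_mono)
    also have "\<dots> = fs.span (f ` BS)" by (rule f.span_image[symmetric])
    also have "\<dots> \<subseteq> fs.span (f ` C)"
    proof (rule fs.span_minimal)
      have "f b \<in> fs.span (f ` C)" if "b \<in> BS" for b
      proof (cases "b \<in> BK")
        case True
        then have "f b = 0" using BK(1) K_def by auto
        then show ?thesis by (simp add: fs.span_zero)
      qed (use that C_def in \<open>auto intro: fs.span_base\<close>)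
      then show "f ` BS \<subseteq> fs.span (f ` C)" by blast
    qed simp
    finally show "f ` S \<subseteq> f ` fs.span C" by (simp add: f.span_image)
  qed (use spanC in auto)
  then have "fs.dim (f ` S) = card C"
    using f.independent_injective_image[OF fs.independent_mono[OF BS(3)] inj]
      card_image[OF inj_on_subset[OF inj fs.span_superset]]
    by (simp add: C_def f.span_image[symmetric] fs.dim_eq_card_independent)
  then show ?thesis
    using fs.basis_card_eq_dim[OF BS(2) BS(4) BS(3)] cardBS BK(4) K_def by simp
qed

definition supported_on :: "'b set \<Rightarrow> ('b \<Rightarrow> 'a::zero) set" where
  "supported_on X = {v. \<forall>i. v i \<noteq> 0 \<longrightarrow> i \<in> X}"

definition unit_fun :: "'b \<Rightarrow> 'b \<Rightarrow> 'a::{zero,one}" where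
  "unit_fun j = (\<lambda>i. if i = j then 1 else 0)"

lemma inj_unit_fun: "inj (unit_fun :: 'b \<Rightarrow> 'b \<Rightarrow> 'a::zero_neq_one)"
  unfolding inj_def unit_fun_def by (metis zero_neq_one)

lemma subspace_supported_on: "fs.subspace (supported_on X)"
  unfolding fs.subspace_def supported_on_def by (auto simp: fun_eq_iff fscale_apply) (metis add.left_neutral)

lemma supported_on_eq_span:
  assumes "finite X"
  shows "(supported_on X :: ('b \<Rightarrow> 'a::field) set) = fs.span (unit_fun ` X)"
proof
  show "(supported_on X :: ('b \<Rightarrow> 'a) set) \<subseteq> fs.span (unit_fun ` X)"
  proof
    fix v :: "'b \<Rightarrow> 'a" assume v: "v \<in> supported_on X"
    have "(\<Sum>j\<in>X. fscale (v j) (unit_fun j)) i = (\<Sum>j\<in>X. if i = j then v j else 0)" for i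
      unfolding sum_fun_apply by (rule sum.cong) (auto simp: unit_fun_def fscale_apply)
    then have "v = (\<Sum>j\<in>X. fscale (v j) (unit_fun j))"
      using v assms by (auto simp: fun_eq_iff fscale_apply supported_on_def)
    also have "\<dots> \<in> fs.span (unit_fun ` X)"
      by (intro fs.span_sum fs.span_scale fs.span_base) auto
    finally show "v \<in> fs.span (unit_fun ` X)" .
  qed
  show "fs.span (unit_fun ` X) \<subseteq> (supported_on X :: ('b \<Rightarrow> 'a) set)"
    by (rule fs.span_minimal[OF _ subspace_supported_on])
      (auto simp: supported_on_def unit_fun_def split: if_splits)
qed

lemma independent_unit_funs: "fs.independent (unit_fun ` X :: ('b \<Rightarrow> 'a::field) set)"
  unfolding fs.dependent_def
proof clarify
  fix j assume "j \<in> X" and j: "(unit_fun j :: 'b \<Rightarrow> 'a) \<in> fs.span (unit_fun ` X - {unit_fun j})"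
  have "fs.span (unit_fun ` X - {unit_fun j}) \<subseteq> {v :: 'b \<Rightarrow> 'a. v j = 0}"
    by (rule fs.span_minimal) (auto simp: fs.subspace_def unit_fun_def fscale_apply)
  with j show False by (auto simp: unit_fun_def)
qed

lemma dim_supported_on:
  assumes "finite X"
  shows "fs.dim (supported_on X :: ('b \<Rightarrow> 'a::field) set) = card X"
proof -
  have "card (unit_fun ` X :: ('b \<Rightarrow> 'a) set) = card X"
    by (rule card_image[OF inj_on_subset[OF inj_unit_fun subset_UNIV]])
  then show ?thesis
    unfolding supported_on_eq_span[OF assms] fs.dim_span_eq_card_independent[OF independent_unit_funs] .
qed

lemma dim_columns_le_dim_rows:
  fixes q :: "'u \<Rightarrow> 'v \<Rightarrow> 'a::field"
  assumes "finite U"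
  shows "fs.dim ((\<lambda>z u. if u \<in> U then q u z else 0) ` B)
    \<le> fs.dim ((\<lambda>u z. if z \<in> B then q u z else 0) ` U)"
proof -
  define row where "row u = (\<lambda>z. if z \<in> B then q u z else 0)" for u
  define col where "col z = (\<lambda>u. if u \<in> U then q u z else 0)" for z
  obtain D where D: "D \<subseteq> row ` U" "fs.independent D" "row ` U \<subseteq> fs.span D" "card D = fs.dim (row ` U)"
    by (rule fs.basis_exists)
  have finD: "finite D" using D(1) assms finite_subset by blast
  define \<alpha> where "\<alpha> u d = fs.representation D (row u) d" for u d
  have row_eq: "row u = (\<Sum>d\<in>D. fscale (\<alpha> u d) d)" if "u \<in> U" for u
    unfolding \<alpha>_def using D(3) that
    by (intro fs.sum_representation_eq[symmetric, OF D(2) _ finD order_refl]) auto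
  define coef where "coef d = (\<lambda>u. if u \<in> U then \<alpha> u d else 0)" for d
  have "col z = (\<Sum>d\<in>D. fscale (d z) (coef d))" if "z \<in> B" for z
  proof
    fix u
    show "col z u = (\<Sum>d\<in>D. fscale (d z) (coef d)) u"
    proof (cases "u \<in> U")
      case True
      have "col z u = row u z" using that True by (simp add: col_def row_def)
      also have "\<dots> = (\<Sum>d\<in>D. \<alpha> u d * d z)" by (simp add: row_eq[OF True] sum_fun_apply fscale_apply)
      finally show ?thesis using True by (simp add: sum_fun_apply fscale_apply coef_def mult.commute)
    qed (simp add: col_def coef_def sum_fun_apply fscale_apply)
  qed
  then have "col ` B \<subseteq> fs.span (coef ` D)"
    using fs.span_sum[OF fs.span_scale[OF fs.span_base[OF imageI]]] by auto
  then have "fs.dim (col ` B) \<le> card (coef ` D)"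
    using fs.dim_le_card finD by blast
  also have "\<dots> \<le> card D" by (rule card_image_le[OF finD])
  finally show ?thesis using D(4) unfolding row_def col_def by simp
qed

lemma dim_rows_eq_dim_columns:
  fixes q :: "'u \<Rightarrow> 'v \<Rightarrow> 'a::field"
  assumes "finite U" "finite B"
  shows "fs.dim ((\<lambda>u z. if z \<in> B then q u z else 0) ` U)
    = fs.dim ((\<lambda>z u. if u \<in> U then q u z else 0) ` B)"
  using dim_columns_le_dim_rows[OF assms(1), of q B] dim_columns_le_dim_rows[OF assms(2), of "\<lambda>z u. q u z" U]
  by simp

lemma dim_annihilator:
  fixes p :: "('b \<Rightarrow> 'a::field) \<Rightarrow> ('c \<Rightarrow> 'a) \<Rightarrow> 'a"
  assumes U: "finite U"
    and add_left: "\<And>x1 x2 y. p (x1 + x2) y = p x1 y + p x2 y"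
    and scale_left: "\<And>c x y. p (fscale c x) y = c * p x y"
    and add_right: "\<And>x y1 y2. p x (y1 + y2) = p x y1 + p x y2"
    and scale_right: "\<And>c x y. p x (fscale c y) = c * p x y"
    and Z: "fs.subspace Z" "finite BY" "Z \<subseteq> fs.span BY"
    and nondegenerate: "\<And>y. y \<in> Z \<Longrightarrow> \<forall>u\<in>U. p u y = 0 \<Longrightarrow> y = 0"
  shows "fs.dim (fs.span U) = fs.dim Z + fs.dim {x\<in>fs.span U. \<forall>z\<in>Z. p x z = 0}"
proof -
  obtain BZ where BZ: "BZ \<subseteq> Z" "fs.independent BZ" "Z \<subseteq> fs.span BZ" "card BZ = fs.dim Z"
    by (rule fs.basis_exists)
  have finBZ: "finite BZ" using fs.independent_span_bound[OF Z(2) BZ(2)] BZ(1) Z(3) by blast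
  define row where "row x = (\<lambda>z. if z \<in> BZ then p x z else 0)" for x
  define col where "col z = (\<lambda>u. if u \<in> U then p u z else 0)" for z
  interpret row: Vector_Spaces.linear fscale fscale row
    by (rule linear_fscaleI) (auto simp: row_def add_left scale_left fun_eq_iff fscale_apply)
  interpret col: Vector_Spaces.linear fscale fscale col
    by (rule linear_fscaleI) (auto simp: col_def add_right scale_right fun_eq_iff fscale_apply)
  have "{x\<in>fs.span U. row x = 0} = {x\<in>fs.span U. \<forall>z\<in>Z. p x z = 0}"
  proof -
    have "row x = 0 \<longleftrightarrow> (\<forall>z\<in>Z. p x z = 0)" for x
    proof
      assume "row x = 0"
      then have "BZ \<subseteq> {y. p x y = 0}"
        unfolding row_def fun_eq_iff zero_fun_apply subset_iff mem_Collect_eq by metis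
      moreover have "fs.subspace {y. p x y = 0}"
        using scale_right[where c=0 and y=0] by (auto simp: fs.subspace_def add_right scale_right)
      ultimately show "\<forall>z\<in>Z. p x z = 0" using fs.span_minimal BZ(3) by blast
    next
      assume "\<forall>z\<in>Z. p x z = 0"
      then show "row x = 0" using BZ(1) by (auto simp: row_def fun_eq_iff fscale_apply)
    qed
    then show ?thesis by simp
  qed
  moreover have "fs.dim (row ` fs.span U) = card BZ"
  proof -
    have "fs.dim (row ` fs.span U) = fs.dim (row ` U)"
      by (simp only: row.span_image[symmetric] fs.dim_span)
    also have "\<dots> = fs.dim (col ` BZ)"
      using dim_rows_eq_dim_columns[OF U finBZ, of p] unfolding row_def col_def .
    finally have "fs.dim (row ` fs.span U) = fs.dim (col ` BZ)" .
    moreover have "inj_on col (fs.span BZ)"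
      unfolding col.inj_on_iff_eq_0[OF fs.subspace_span]
      using nondegenerate fs.span_minimal[OF BZ(1) Z(1)] by (auto simp: col_def fun_eq_iff fscale_apply)
    moreover have "card (col ` BZ) = card BZ"
      using calculation(2) card_image inj_on_subset fs.span_superset by metis
    ultimately show ?thesis
      using fs.dim_eq_card_independent[OF col.independent_injective_image[OF BZ(2)]] by simp
  qed
  ultimately show ?thesis
    using dim_kernel_add_dim_image[OF row.linear_axioms fs.subspace_span U order_refl] BZ(4) by simp
qed

section \<open>Exterior products\<close>

lemma wedge_add_left: "wedge (a + b) c = wedge a c + wedge b c"
  by (auto simp: wedge_def fun_eq_iff sum.distrib[symmetric] algebra_simps)

lemma wedge_add_right: "wedge a (b + c) = wedge a b + wedge a c"
  by (auto simp: wedge_def fun_eq_iff sum.distrib[symmetric] algebra_simps)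

lemma wedge_fscale_left: "wedge (fscale k a) c = fscale k (wedge a c)"
  by (auto simp: wedge_def fun_eq_iff fscale_apply sum_distrib_left algebra_simps)

lemma wedge_fscale_right: "wedge a (fscale k c) = fscale k (wedge a c)"
  by (auto simp: wedge_def fun_eq_iff fscale_apply sum_distrib_left algebra_simps)

lemma wedge_zero_left [simp]: "wedge 0 b = 0"
  by (auto simp: wedge_def fun_eq_iff)

lemma wedge_zero_right [simp]: "wedge a 0 = 0"
  by (auto simp: wedge_def fun_eq_iff)

lemma wedge_uminus_right: "wedge a (- b) = - wedge a b"
  by (auto simp: wedge_def fun_eq_iff sum_negf[symmetric])

lemma linear_wedge_right: "Vector_Spaces.linear fscale fscale (wedge \<alpha>)"
  by (rule linear_fscaleI) (simp_all add: wedge_add_right wedge_fscale_right)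

lemma vec_ext_add: "vec_ext (u + v) = vec_ext u + vec_ext v"
  by (auto simp: vec_ext_def fun_eq_iff)

lemma vec_ext_fscale: "vec_ext (fscale c u) = fscale c (vec_ext u)"
  by (auto simp: vec_ext_def fun_eq_iff fscale_apply)

lemma linear_wedge_vec_ext: "Vector_Spaces.linear fscale fscale (\<lambda>v. wedge (vec_ext v) \<beta>)"
  by (rule linear_fscaleI) (simp_all add: vec_ext_add vec_ext_fscale wedge_add_left wedge_fscale_left)

lemma wedge_supported_singleton:
  assumes "finite C" "I \<subseteq> C" "\<And>K. K \<noteq> I \<Longrightarrow> a K = 0"
  shows "wedge a b C = ext_sign I (C - I) * a I * b (C - I)"
proof -
  have "wedge a b C = (\<Sum>K\<in>Pow C. ext_sign K (C - K) * a K * b (C - K))"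
    using assms(1) by (simp add: wedge_def)
  also have "\<dots> = ext_sign I (C - I) * a I * b (C - I)"
    using assms by (subst sum.remove[of _ I]) (auto intro: sum.neutral)
  finally show ?thesis .
qed

definition ins_sign :: "nat \<Rightarrow> nat set \<Rightarrow> 'a::field" where
  "ins_sign j K = (-1) ^ card {x\<in>K. x < j}"

lemma ins_sign_neq_0: "ins_sign j K \<noteq> 0"
  by (simp add: ins_sign_def)

lemma ext_sign_singleton: "ext_sign {j} (K - {j}) = ins_sign j K"
proof -
  have "{(i, x). i \<in> {j} \<and> x \<in> K - {j} \<and> x < i} = (\<lambda>x. (j, x)) ` {x\<in>K. x < j}"
    by auto
  then have "card {(i, x). i \<in> {j} \<and> x \<in> K - {j} \<and> x < i} = card {x\<in>K. x < j}"
    by (simp add: card_image inj_on_def)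
  then show ?thesis by (simp add: ext_sign_def ins_sign_def)
qed

lemma ins_sign_remove:
  assumes "finite K" "i \<in> K" "i \<noteq> j"
  shows "ins_sign j (K - {i}) = (if i < j then -1 else 1) * (ins_sign j K :: 'a::field)"
proof -
  have "{x\<in>K. x < j} = (if i < j then insert i {x\<in>K - {i}. x < j} else {x\<in>K - {i}. x < j})"
    using assms by auto
  then show ?thesis using assms(1) by (simp add: ins_sign_def)
qed

lemma wedge_vec_ext:
  "wedge (vec_ext v) \<beta> K = (if finite K then (\<Sum>j\<in>K. ins_sign j K * v j * \<beta> (K - {j})) else 0)"
proof (cases "finite K")
  case True
  have "(\<Sum>I\<in>Pow K. ext_sign I (K - I) * vec_ext v I * \<beta> (K - I))
      = (\<Sum>I\<in>(\<lambda>j. {j}) ` K. ext_sign I (K - I) * vec_ext v I * \<beta> (K - I))"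
    using True by (intro sum.mono_neutral_right) (auto simp: vec_ext_def card_1_singleton_iff)
  also have "\<dots> = (\<Sum>j\<in>K. ins_sign j K * v j * \<beta> (K - {j}))"
    by (subst sum.reindex) (auto simp: ext_sign_singleton vec_ext_def)
  finally show ?thesis using True by (simp add: wedge_def)
qed (simp add: wedge_def)

lemma sum_off_diagonal_antisym:
  fixes G :: "nat \<Rightarrow> nat \<Rightarrow> 'a::field"
  assumes "\<And>i j. i \<in> K \<Longrightarrow> j \<in> K \<Longrightarrow> i \<noteq> j \<Longrightarrow> G j i = - G i j"
  shows "(\<Sum>i\<in>K. \<Sum>j\<in>K. if i \<noteq> j then G i j else 0) = 0"
proof -
  have "(\<Sum>i\<in>K. \<Sum>j\<in>K. if i \<noteq> j then G i j else 0)
      = (\<Sum>i\<in>K. \<Sum>j\<in>K. if i < j then G i j else 0) + (\<Sum>i\<in>K. \<Sum>j\<in>K. if j < i then G i j else 0)"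
    unfolding sum.distrib[symmetric] by (intro sum.cong refl) (auto simp: linorder_neq_iff)
  also have "(\<Sum>i\<in>K. \<Sum>j\<in>K. if j < i then G i j else 0) = (\<Sum>i\<in>K. \<Sum>j\<in>K. if i < j then G j i else 0)"
    by (subst sum.swap) simp
  also have "\<dots> = - (\<Sum>i\<in>K. \<Sum>j\<in>K. if i < j then G i j else 0)"
    unfolding sum_negf[symmetric]
  proof (intro sum.cong refl)
    fix i j assume "i \<in> K" "j \<in> K"
    then show "(if i < j then G j i else 0) = - (if i < j then G i j else 0)"
      using assms[of i j] by (cases "i < j") auto
  qed
  finally show ?thesis by simp
qed

lemma wedge_vec_ext_vec_ext:
  assumes "finite K"
  shows "wedge (vec_ext u) (wedge (vec_ext v) \<beta>) K =
    (\<Sum>i\<in>K. \<Sum>j\<in>K. if i \<noteq> j then u i * v j * (ins_sign i K * ins_sign j (K - {i}) * \<beta> (K - {i} - {j})) else 0)"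
proof -
  have "{j. i \<noteq> j} = - {i}" for i :: nat by auto
  with assms show ?thesis
    by (simp add: wedge_vec_ext sum_distrib_left if_distrib[of "\<lambda>x. _ * x"] sum.If_cases Diff_eq
      algebra_simps cong: sum.cong)
qed

lemma wedge_vec_ext_self: "wedge (vec_ext v) (wedge (vec_ext v) \<beta>) = 0"
proof
  fix K
  show "wedge (vec_ext v) (wedge (vec_ext v) \<beta>) K = 0 K"
  proof (cases "finite K")
    case True
    define F where "F i j = ins_sign i K * ins_sign j (K - {i}) * \<beta> (K - {i} - {j})" for i j
    have "v j * v i * F j i = - (v i * v j * F i j)" if "i \<in> K" "j \<in> K" "i \<noteq> j" for i j
    proof -
      have "K - {j} - {i} = K - {i} - {j}" by auto
      moreover have "ins_sign i (K - {j}) = (if j < i then -1 else 1) * (ins_sign i K :: 'a)"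
        "ins_sign j (K - {i}) = (if i < j then -1 else 1) * (ins_sign j K :: 'a)"
        using ins_sign_remove[OF True that(2), of i] ins_sign_remove[OF True that(1) that(3)] that(3)
        by auto
      moreover have "j < i \<longleftrightarrow> \<not> i < j" using that(3) by auto
      ultimately show ?thesis unfolding F_def by (cases "i < j") (simp_all add: algebra_simps)
    qed
    then have "(\<Sum>i\<in>K. \<Sum>j\<in>K. if i \<noteq> j then v i * v j * F i j else 0) = 0"
      by (rule sum_off_diagonal_antisym)
    then show ?thesis using True unfolding F_def by (simp add: wedge_vec_ext_vec_ext)
  qed (simp add: wedge_def)
qed

text \<open>Obtained by polarising \<open>wedge_vec_ext_self\<close>; the converse derivation would fail in
  characteristic 2.\<close>

lemma wedge_vec_ext_anticomm:
  "wedge (vec_ext u) (wedge (vec_ext v) \<beta>) = - wedge (vec_ext v) (wedge (vec_ext u) \<beta>)"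
proof -
  have "0 = wedge (vec_ext (u + v)) (wedge (vec_ext (u + v)) \<beta>)"
    by (rule wedge_vec_ext_self[symmetric])
  also have "\<dots> = wedge (vec_ext u) (wedge (vec_ext v) \<beta>) + wedge (vec_ext v) (wedge (vec_ext u) \<beta>)"
    by (simp only: vec_ext_add wedge_add_left wedge_add_right wedge_vec_ext_self add_0_left
        add_0_right add.commute)
  finally show ?thesis by (simp add: eq_neg_iff_add_eq_0)
qed

lemma wedge_list_swap: "wedge_list (xs @ a # b # ys) = - wedge_list (xs @ b # a # ys)"
proof (induction xs)
  case Nil
  show ?case by (simp only: append_Nil wedge_list.simps) (rule wedge_vec_ext_anticomm)
next
  case (Cons c xs)
  then show ?case by (simp only: append_Cons wedge_list.simps wedge_uminus_right)
qed

lemma wedge_list_Cons_mem: "v \<in> set ws \<Longrightarrow> wedge_list (v # ws) = 0"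
proof (induction ws)
  case (Cons w ws)
  show ?case
  proof (cases "v = w")
    case False
    then have "wedge_list (v # w # ws) = - wedge_list (w # v # ws)"
      using wedge_list_swap[of "[]" v w ws] by simp
    also have "\<dots> = - wedge (vec_ext w) (wedge_list (v # ws))"
      by (simp only: wedge_list.simps)
    also have "\<dots> = 0"
    proof -
      have "v \<in> set ws" using Cons.prems False by simp
      then have "wedge_list (v # ws) = 0" by (rule Cons.IH)
      then show ?thesis by (simp only: wedge_zero_right neg_equal_0_iff_equal)
    qed
    finally show ?thesis .
  qed (simp add: wedge_vec_ext_self)
qed simp

lemma wedge_list_Cons_span:
  assumes "v \<in> fs.span (set ws)"
  shows "wedge_list (v # ws) = 0"
proof -
  have "fs.span (set ws) \<subseteq> {v. wedge (vec_ext v) (wedge_list ws) = 0}"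
  proof (rule fs.span_minimal)
    interpret Vector_Spaces.linear fscale fscale "\<lambda>v. wedge (vec_ext v) (wedge_list ws)"
      by (rule linear_wedge_vec_ext)
    show "fs.subspace {v. wedge (vec_ext v) (wedge_list ws) = 0}" by (rule subspace_kernel)
  qed (use wedge_list_Cons_mem in auto)
  then show ?thesis using assms by auto
qed

lemma wedge_list_not_distinct: "\<not> distinct vs \<Longrightarrow> wedge_list vs = 0"
  by (induction vs) (auto simp: wedge_list_Cons_mem[simplified])

lemma wedge_list_append_eq_0: "wedge_list vs = 0 \<Longrightarrow> wedge_list (us @ vs) = 0"
  by (induction us) auto

lemma wedge_list_move_front:
  "\<exists>c\<in>{1, -1}. wedge_list (xs @ z # ys) = fscale c (wedge_list (z # xs @ ys))"
proof (induction xs)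
  case Nil
  show ?case by (intro bexI[of _ 1]) simp_all
next
  case (Cons x xs)
  then obtain c where c: "c \<in> {1, -1}" "wedge_list (xs @ z # ys) = fscale c (wedge_list (z # xs @ ys))"
    by blast
  have swap: "wedge_list (x # z # xs @ ys) = - wedge_list (z # (x # xs) @ ys)"
    using wedge_list_swap[of "[]" x z "xs @ ys"] by simp
  have "wedge_list ((x # xs) @ z # ys) = fscale c (wedge_list (x # z # xs @ ys))"
    by (simp only: append_Cons wedge_list.simps c(2) wedge_fscale_right)
  also have "\<dots> = fscale c (- wedge_list (z # (x # xs) @ ys))"
    by (rule arg_cong[OF swap])
  also have "\<dots> = fscale (- c) (wedge_list (z # (x # xs) @ ys))"
    by (simp only: fscale_def uminus_apply mult_minus_right mult_minus_left)
  finally show ?case by (rule bexI[of _ "- c"]) (use c(1) in auto)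
qed

lemma wedge_list_perm:
  "distinct ys \<Longrightarrow> distinct zs \<Longrightarrow> set ys = set zs \<Longrightarrow>
   \<exists>c\<in>{1, -1}. wedge_list ys = fscale c (wedge_list zs)"
proof (induction zs arbitrary: ys)
  case Nil
  then show ?case by (intro bexI[of _ 1]) simp_all
next
  case (Cons z zs)
  then have "z \<in> set ys" by simp
  then obtain xs ys' where ys: "ys = xs @ z # ys'" using split_list by metis
  have "\<exists>c\<in>{1, -1}. wedge_list (xs @ ys') = fscale c (wedge_list zs)"
    by (rule Cons.IH) (use Cons.prems ys in auto)
  then obtain c where c: "c \<in> {1, -1}" "wedge_list (xs @ ys') = fscale c (wedge_list zs)"
    by blast
  obtain d where d: "d \<in> {1, -1}" "wedge_list ys = fscale d (wedge_list (z # xs @ ys'))"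
    using wedge_list_move_front[of xs z ys'] ys by blast
  have "wedge_list ys = fscale (d * c) (wedge_list (z # zs))"
    by (simp add: d(2) c(2) wedge_fscale_right)
  then show ?case by (rule bexI[of _ "d * c"]) (use c(1) d(1) in auto)
qed

lemma wedge_list_unit_funs:
  "distinct js \<Longrightarrow> wedge_list (map unit_fun js) (set js) \<noteq> (0::'a::field)"
proof (induction js)
  case (Cons j js)
  have "wedge_list (map unit_fun (j # js)) (set (j # js))
     = (\<Sum>i\<in>set (j # js). ins_sign i (set (j # js)) * unit_fun j i
          * wedge_list (map unit_fun js) (set (j # js) - {i}) :: 'a)"
    by (simp add: wedge_vec_ext)
  also have "\<dots> = ins_sign j (set (j # js)) * wedge_list (map unit_fun js) (set js)"
    using Cons.prems by (subst sum.remove[of _ j]) (auto simp: unit_fun_def intro!: sum.neutral)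
  finally show ?case using Cons ins_sign_neq_0 by simp
qed simp

lemma wedge_list_support:
  assumes "set vs \<subseteq> supported_on A" "wedge_list vs K \<noteq> 0"
  shows "finite K \<and> K \<subseteq> A \<and> card K = length vs"
  using assms
proof (induction vs arbitrary: K)
  case (Cons v vs)
  have "finite K" using Cons.prems(2) by (auto simp: wedge_vec_ext split: if_splits)
  with Cons.prems(2) have "(\<Sum>j\<in>K. ins_sign j K * v j * wedge_list vs (K - {j})) \<noteq> 0"
    by (simp add: wedge_vec_ext)
  then obtain j where "j \<in> K" "ins_sign j K * v j * wedge_list vs (K - {j}) \<noteq> 0"
    by (rule sum.not_neutral_contains_not_neutral)
  then have j: "j \<in> K" "v j \<noteq> 0" "wedge_list vs (K - {j}) \<noteq> 0" by auto
  with Cons.IH Cons.prems(1) have IH: "K - {j} \<subseteq> A" "card (K - {j}) = length vs" by auto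
  moreover have "j \<in> A" using Cons.prems(1) j(2) by (auto simp: supported_on_def)
  ultimately have "K \<subseteq> A" by blast
  then show ?case using \<open>finite K\<close> card.remove[OF \<open>finite K\<close> j(1)] IH(2) by simp
qed (auto split: if_splits)

lemma wedge_list_in_span:
  "set xs \<subseteq> fs.span B \<Longrightarrow>
    wedge_list xs \<in> fs.span {wedge_list ys | ys. set ys \<subseteq> B \<and> length ys = length xs}"
proof (induction xs)
  case Nil
  then show ?case by (intro fs.span_base) auto
next
  case (Cons x xs)
  let ?M = "{wedge_list ys | ys. set ys \<subseteq> B \<and> length ys = length xs}"
  let ?M' = "{wedge_list ys | ys. set ys \<subseteq> B \<and> length ys = length (x # xs)}"
  interpret wx: Vector_Spaces.linear fscale fscale "wedge (vec_ext x)"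
    by (rule linear_wedge_right)
  have "wedge (vec_ext x) w \<in> fs.span ?M'" if w: "w \<in> ?M" for w
  proof -
    obtain ys where ys: "set ys \<subseteq> B" "length ys = length xs" "w = wedge_list ys"
      using w by blast
    interpret wys: Vector_Spaces.linear fscale fscale "\<lambda>v. wedge (vec_ext v) (wedge_list ys)"
      by (rule linear_wedge_vec_ext)
    have "(\<lambda>v. wedge (vec_ext v) (wedge_list ys)) ` B \<subseteq> ?M'"
    proof clarify
      fix b assume "b \<in> B"
      with ys show "\<exists>zs. wedge (vec_ext b) (wedge_list ys) = wedge_list zs
          \<and> set zs \<subseteq> B \<and> length zs = length (x # xs)"
        by (intro exI[of _ "b # ys"]) simp
    qed
    then have "(\<lambda>v. wedge (vec_ext v) (wedge_list ys)) ` fs.span B \<subseteq> fs.span ?M'"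
      by (simp add: wys.span_image[symmetric] fs.span_mono)
    moreover have "x \<in> fs.span B" using Cons.prems by simp
    ultimately show ?thesis using ys(3) by blast
  qed
  then have "wedge (vec_ext x) ` fs.span ?M \<subseteq> fs.span ?M'"
    unfolding wx.span_image[symmetric] by (intro fs.span_minimal fs.subspace_span) blast
  moreover have "wedge_list xs \<in> fs.span ?M" using Cons by simp
  ultimately show ?case by auto
qed

lemma wedge_list_neq_0_if_spans_units:
  fixes bs :: "(nat \<Rightarrow> 'a::field) list"
  assumes "distinct bs" "distinct js" "length bs = length js"
    and "unit_fun ` set js \<subseteq> fs.span (set bs)"
  shows "wedge_list bs \<noteq> 0"
proof
  assume bs: "wedge_list bs = 0"
  let ?es = "map unit_fun js :: (nat \<Rightarrow> 'a) list"
  have "wedge_list ?es \<in> fs.span {wedge_list ys | ys. set ys \<subseteq> set bs \<and> length ys = length ?es}"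
    using assms(4) by (intro wedge_list_in_span) auto
  moreover have "{wedge_list ys | ys. set ys \<subseteq> set bs \<and> length ys = length ?es} \<subseteq> {0}"
  proof clarify
    fix ys :: "(nat \<Rightarrow> 'a) list" assume ys: "set ys \<subseteq> set bs" "length ys = length ?es"
    show "wedge_list ys = 0"
    proof (cases "distinct ys")
      case True
      then have "set ys = set bs"
        using ys assms(1,3) by (metis card_subset_eq distinct_card finite_set length_map)
      then obtain c where "wedge_list ys = fscale c (wedge_list bs)"
        using wedge_list_perm[OF True assms(1)] by blast
      then show ?thesis using bs by simp
    qed (rule wedge_list_not_distinct)
  qed
  ultimately have "wedge_list ?es = 0"
    using fs.span_mono[of _ "{0}"] by (auto simp: fs.span_insert_0)
  then have "wedge_list ?es (set js) = 0" by simp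
  with wedge_list_unit_funs[OF assms(2)] show False by blast
qed

lemma wedge_list_independent_neq_0:
  fixes vs :: "(nat \<Rightarrow> 'a::field) list"
  assumes "finite X" "distinct vs" "set vs \<subseteq> supported_on X" "fs.independent (set vs)"
  shows "wedge_list vs \<noteq> 0"
proof
  assume vs: "wedge_list vs = 0"
  obtain B where B: "set vs \<subseteq> B" "B \<subseteq> supported_on X" "fs.independent B" "supported_on X \<subseteq> fs.span B"
    using fs.maximal_independent_subset_extend[OF assms(3,4)] by blast
  have finB: "finite B"
    using fs.independent_span_bound[OF finite_imageI[OF assms(1)] B(3)] B(2)
    by (auto simp: supported_on_eq_span[OF assms(1)])
  have cardB: "card B = card X"
    using fs.basis_card_eq_dim[OF B(2) B(4) B(3)] dim_supported_on[OF assms(1)] by simp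
  obtain us where us: "distinct us" "set us = B - set vs"
    using finite_distinct_list[of "B - set vs"] finB by auto
  obtain js where js: "distinct js" "set js = X"
    using finite_distinct_list[OF assms(1)] by auto
  have "wedge_list (us @ vs) \<noteq> 0"
  proof (rule wedge_list_neq_0_if_spans_units[OF _ js(1)])
    show "distinct (us @ vs)" using us assms(2) by auto
    have "set (us @ vs) = B" using us B(1) by auto
    then show "length (us @ vs) = length js"
      using cardB distinct_card[OF \<open>distinct (us @ vs)\<close>] distinct_card[OF js(1)] js(2) by simp
    show "unit_fun ` set js \<subseteq> fs.span (set (us @ vs))"
      using B(4) \<open>set (us @ vs) = B\<close> js(2) by (auto simp: supported_on_def unit_fun_def split: if_splits)
  qed
  then show False using wedge_list_append_eq_0[OF vs] by simp
qed

section \<open>The pairing of complementary exterior powers\<close>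

definition ksubsets :: "nat \<Rightarrow> nat \<Rightarrow> nat set set" where
  "ksubsets m k = {I. I \<subseteq> {..<m} \<and> card I = k}"

lemma finite_ksubsets: "finite (ksubsets m k)"
  unfolding ksubsets_def by (rule finite_subset[of _ "Pow {..<m}"]) auto

lemma ext_pow_eq_supported_on: "ext_pow m k = supported_on (ksubsets m k)"
  by (auto simp: ext_pow_def supported_on_def ksubsets_def)

lemma Vsp_eq_supported_on: "Vsp m = supported_on {..<m}"
  by (auto simp: Vsp_def supported_on_def not_less[symmetric])

lemma ext_sign_neq_0 [simp]: "ext_sign I J \<noteq> (0 :: 'a::field)"
  by (simp add: ext_sign_def)

definition top_pairing :: "nat \<Rightarrow> (nat set \<Rightarrow> 'a::field) \<Rightarrow> (nat set \<Rightarrow> 'a) \<Rightarrow> 'a" where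
  "top_pairing m \<alpha> \<beta> = top_coeff m (wedge \<alpha> \<beta>)"

lemma top_pairing_zero_left [simp]: "top_pairing m 0 \<beta> = 0"
  by (simp add: top_pairing_def top_coeff_def)

lemma top_pairing_add_left: "top_pairing m (\<alpha>1 + \<alpha>2) \<beta> = top_pairing m \<alpha>1 \<beta> + top_pairing m \<alpha>2 \<beta>"
  by (simp add: top_pairing_def top_coeff_def wedge_add_left)

lemma top_pairing_fscale_left: "top_pairing m (fscale c \<alpha>) \<beta> = c * top_pairing m \<alpha> \<beta>"
  by (simp add: top_pairing_def top_coeff_def wedge_fscale_left fscale_apply)

lemma top_pairing_add_right: "top_pairing m \<alpha> (\<beta>1 + \<beta>2) = top_pairing m \<alpha> \<beta>1 + top_pairing m \<alpha> \<beta>2"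
  by (simp add: top_pairing_def top_coeff_def wedge_add_right)

lemma top_pairing_fscale_right: "top_pairing m \<alpha> (fscale c \<beta>) = c * top_pairing m \<alpha> \<beta>"
  by (simp add: top_pairing_def top_coeff_def wedge_fscale_right fscale_apply)

lemma ext_pow_eq_0_if_pairings_vanish:
  assumes "l \<le> m" "\<omega> \<in> ext_pow m (m - l)"
    and "\<And>I. I \<in> ksubsets m l \<Longrightarrow> \<exists>a. (\<forall>K. K \<noteq> I \<longrightarrow> a K = 0) \<and> a I \<noteq> 0 \<and> top_pairing m a \<omega> = 0"
  shows "\<omega> = 0"
proof
  fix J
  show "\<omega> J = 0 J"
  proof (cases "J \<in> ksubsets m (m - l)")
    case True
    then have J: "J \<subseteq> {..<m}" "card J = m - l" by (auto simp: ksubsets_def)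
    then have "card ({..<m} - J) = l" using assms(1) by (simp add: card_Diff_subset finite_subset)
    then have "{..<m} - J \<in> ksubsets m l" by (simp add: ksubsets_def)
    then obtain a where a: "\<forall>K. K \<noteq> {..<m} - J \<longrightarrow> a K = 0" "a ({..<m} - J) \<noteq> 0"
      "top_pairing m a \<omega> = 0"
      using assms(3) by blast
    have "top_pairing m a \<omega> = ext_sign ({..<m} - J) J * a ({..<m} - J) * \<omega> J"
      using wedge_supported_singleton[of "{..<m}" "{..<m} - J" a \<omega>] a(1) J(1)
      by (simp add: top_pairing_def top_coeff_def double_diff)
    then show ?thesis using a(2,3) by simp
  next
    case False
    then show ?thesis using assms(2) by (auto simp: ext_pow_eq_supported_on supported_on_def)
  qed
qed

section \<open>Representatives of the \<open>l\<close>-dimensional subspaces\<close>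

locale plucker_representatives =
  fixes m l n :: nat
    and W :: "nat \<Rightarrow> (nat \<Rightarrow> 'a::field) set"
    and bas :: "nat \<Rightarrow> (nat \<Rightarrow> 'a) list"
  assumes l_le_m: "l \<le> m"
    and bij_W: "bij_betw W {..<n} {S. S \<subseteq> Vsp m \<and> fs.subspace S \<and> fs.dim S = l}"
    and length_bas: "\<And>i. i < n \<Longrightarrow> length (bas i) = l"
    and distinct_bas: "\<And>i. i < n \<Longrightarrow> distinct (bas i)"
    and independent_bas: "\<And>i. i < n \<Longrightarrow> fs.independent (set (bas i))"
    and span_bas: "\<And>i. i < n \<Longrightarrow> fs.span (set (bas i)) = W i"
begin

definition rep :: "nat \<Rightarrow> nat set \<Rightarrow> 'a" where
  "rep i = wedge_list (bas i)"

lemma W_subset_supported_on: "i < n \<Longrightarrow> W i \<subseteq> supported_on {..<m}"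
  using bij_W by (auto simp: bij_betw_def Vsp_eq_supported_on)

lemma set_bas_subset: "i < n \<Longrightarrow> set (bas i) \<subseteq> supported_on {..<m}"
  using W_subset_supported_on span_bas fs.span_superset by blast

lemma rep_in_ext_pow: "i < n \<Longrightarrow> rep i \<in> ext_pow m l"
  using wedge_list_support[OF set_bas_subset] length_bas by (auto simp: ext_pow_def rep_def)

lemma rep_neq_0: "i < n \<Longrightarrow> rep i \<noteq> 0"
  unfolding rep_def
  by (rule wedge_list_independent_neq_0[OF _ distinct_bas set_bas_subset independent_bas]) simp_all

lemma W_eq_wedge_kernel: "i < n \<Longrightarrow> W i = {v \<in> Vsp m. wedge (vec_ext v) (rep i) = 0}"
proof safe
  fix v assume i: "i < n"
  show "v \<in> W i \<Longrightarrow> v \<in> Vsp m" using W_subset_supported_on[OF i] by (auto simp: Vsp_eq_supported_on)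
  show "v \<in> W i \<Longrightarrow> wedge (vec_ext v) (rep i) = 0"
    using wedge_list_Cons_span[of v "bas i"] span_bas[OF i] by (simp add: rep_def)
  assume v: "v \<in> Vsp m" "wedge (vec_ext v) (rep i) = 0"
  show "v \<in> W i"
  proof (rule ccontr)
    assume "v \<notin> W i"
    then have "v \<notin> fs.span (set (bas i))" using span_bas[OF i] by simp
    then have "fs.independent (set (v # bas i))" "v \<notin> set (bas i)"
      using fs.independent_insertI[OF _ independent_bas[OF i]] fs.span_base by auto
    then have "wedge_list (v # bas i) \<noteq> 0"
      using v(1) set_bas_subset[OF i] distinct_bas[OF i]
      by (intro wedge_list_independent_neq_0[of "{..<m}"]) (auto simp: Vsp_eq_supported_on)
    with v(2) show False by (simp add: rep_def)
  qed
qed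

lemma inj_on_rep: "inj_on rep {..<n}"
proof (rule inj_onI)
  fix i j assume "i \<in> {..<n}" "j \<in> {..<n}" "rep i = rep j"
  then have "W i = W j" using W_eq_wedge_kernel by simp
  with bij_W \<open>i \<in> {..<n}\<close> \<open>j \<in> {..<n}\<close> show "i = j" by (auto simp: bij_betw_def inj_on_def)
qed

text \<open>The witness is the representative of the coordinate subspace spanned by the \<open>e_j\<close>, \<open>j \<in> I\<close>.\<close>

lemma ex_rep_supported_on_singleton:
  assumes "I \<in> ksubsets m l"
  shows "\<exists>i<n. (\<forall>K. K \<noteq> I \<longrightarrow> rep i K = 0) \<and> rep i I \<noteq> 0"
proof -
  have I: "I \<subseteq> {..<m}" "card I = l" using assms by (auto simp: ksubsets_def)
  have finI: "finite I" using finite_subset[OF I(1)] by simp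
  let ?S = "supported_on I :: (nat \<Rightarrow> 'a) set"
  have "?S \<subseteq> Vsp m" using I(1) by (auto simp: Vsp_def supported_on_def)
  moreover have "fs.dim ?S = l" using dim_supported_on[OF finI] I(2) by simp
  ultimately have "?S \<in> W ` {..<n}"
    using bij_W subspace_supported_on[of I] by (simp add: bij_betw_def)
  then obtain i where i: "i < n" "W i = supported_on I" by auto
  have bas_I: "set (bas i) \<subseteq> supported_on I"
    using fs.span_superset[of "set (bas i)"] span_bas[OF i(1)] i(2) by simp
  have rep_supp: "rep i K = 0" if "K \<noteq> I" for K
  proof (rule ccontr)
    assume "rep i K \<noteq> 0"
    then have "K \<subseteq> I \<and> card K = length (bas i)"
      using wedge_list_support[OF bas_I] unfolding rep_def by blast
    then have "K = I" using card_subset_eq[OF finI] I(2) length_bas[OF i(1)] by simp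
    with that show False ..
  qed
  moreover have "rep i I \<noteq> 0"
  proof
    assume "rep i I = 0"
    then have "rep i = 0" using rep_supp by (intro ext) (metis zero_fun_apply)
    with rep_neq_0[OF i(1)] show False ..
  qed
  ultimately show ?thesis using i(1) by blast
qed

lemma tau_component: "i < n \<Longrightarrow> tau m n rep \<omega> i = top_pairing m (rep i) \<omega>"
  by (simp add: tau_def top_pairing_def)

lemma linear_tau: "Vector_Spaces.linear fscale fscale (tau m n rep)"
  by (rule linear_fscaleI)
    (auto simp: tau_def top_coeff_def fun_eq_iff wedge_add_right wedge_fscale_right fscale_apply)

lemma tau_eq_0_imp_eq_0:
  assumes "\<omega> \<in> ext_pow m (m - l)" "tau m n rep \<omega> = 0"
  shows "\<omega> = 0"
proof (rule ext_pow_eq_0_if_pairings_vanish[OF l_le_m assms(1)])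
  fix I assume "I \<in> ksubsets m l"
  then obtain i where "i < n" "\<forall>K. K \<noteq> I \<longrightarrow> rep i K = 0" "rep i I \<noteq> 0"
    using ex_rep_supported_on_singleton by blast
  moreover have "top_pairing m (rep i) \<omega> = 0"
    using tau_component[OF \<open>i < n\<close>, of \<omega>] assms(2) by simp
  ultimately show "\<exists>a. (\<forall>K. K \<noteq> I \<longrightarrow> a K = 0) \<and> a I \<noteq> 0 \<and> top_pairing m a \<omega> = 0"
    by blast
qed

definition tau_preimage :: "(nat \<Rightarrow> 'a) set \<Rightarrow> (nat set \<Rightarrow> 'a) set" where
  "tau_preimage D = {\<omega> \<in> ext_pow m (m - l). tau m n rep \<omega> \<in> D}"

definition annihilator :: "(nat \<Rightarrow> 'a) set \<Rightarrow> (nat set \<Rightarrow> 'a) set" where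
  "annihilator D = {\<omega>' \<in> ext_pow m l. \<forall>\<omega>\<in>tau_preimage D. top_pairing m \<omega>' \<omega> = 0}"

lemma subspace_tau_preimage:
  assumes "fs.subspace D"
  shows "fs.subspace (tau_preimage D)"
proof -
  interpret tau: Vector_Spaces.linear fscale fscale "tau m n rep" by (rule linear_tau)
  have "tau_preimage D = ext_pow m (m - l) \<inter> {\<omega>. tau m n rep \<omega> \<in> D}"
    by (auto simp: tau_preimage_def)
  then show ?thesis
    by (simp only: fs.subspace_inter tau.subspace_linear_preimage[OF assms] ext_pow_eq_supported_on
        subspace_supported_on)
qed

lemma image_tau_preimage:
  assumes "D \<subseteq> tau m n rep ` ext_pow m (m - l)"
  shows "tau m n rep ` tau_preimage D = D"
  using assms by (auto simp: tau_preimage_def)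

lemma dim_tau_preimage:
  assumes "fs.subspace D" "D \<subseteq> tau m n rep ` ext_pow m (m - l)"
  shows "fs.dim (tau_preimage D) = fs.dim D"
proof -
  have "tau_preimage D \<subseteq> ext_pow m (m - l)" by (auto simp: tau_preimage_def)
  also have "\<dots> = fs.span (unit_fun ` ksubsets m (m - l))"
    by (simp add: ext_pow_eq_supported_on supported_on_eq_span[OF finite_ksubsets])
  finally have "fs.dim (tau_preimage D)
      = fs.dim {\<omega> \<in> tau_preimage D. tau m n rep \<omega> = 0} + fs.dim (tau m n rep ` tau_preimage D)"
    by (rule dim_kernel_add_dim_image[OF linear_tau subspace_tau_preimage[OF assms(1)]
          finite_imageI[OF finite_ksubsets]])
  moreover have "{\<omega> \<in> tau_preimage D. tau m n rep \<omega> = 0} \<subseteq> fs.span ({} :: (nat set \<Rightarrow> 'a) set)"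
    using tau_eq_0_imp_eq_0 by (auto simp: tau_preimage_def)
  then have "fs.dim {\<omega> \<in> tau_preimage D. tau m n rep \<omega> = 0} \<le> card ({} :: (nat set \<Rightarrow> 'a) set)"
    by (rule fs.dim_le_card) simp
  ultimately show ?thesis using image_tau_preimage[OF assms(2)] by simp
qed

lemma subspace_annihilator: "fs.subspace (annihilator D)"
proof (rule fs.subspaceI)
  have P: "fs.subspace (ext_pow m l :: (nat set \<Rightarrow> 'a) set)"
    by (simp add: ext_pow_eq_supported_on subspace_supported_on)
  show "0 \<in> annihilator D"
    using fs.subspace_0[OF P] by (simp add: annihilator_def)
  show "x + y \<in> annihilator D" if "x \<in> annihilator D" "y \<in> annihilator D" for x y
    using that fs.subspace_add[OF P] by (simp add: annihilator_def top_pairing_add_left)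
  show "fscale c x \<in> annihilator D" if "x \<in> annihilator D" for c x
    using that fs.subspace_scale[OF P] by (simp add: annihilator_def top_pairing_fscale_left)
qed

lemma codim_annihilator:
  assumes "fs.subspace D" "D \<subseteq> tau m n rep ` ext_pow m (m - l)"
  shows "fs.dim (ext_pow m l :: (nat set \<Rightarrow> 'a) set) - fs.dim (annihilator D) = fs.dim D"
proof -
  have span_units: "fs.span (unit_fun ` ksubsets m k) = (ext_pow m k :: (nat set \<Rightarrow> 'a) set)" for k
    by (simp add: ext_pow_eq_supported_on supported_on_eq_span[OF finite_ksubsets])
  have "fs.dim (fs.span (unit_fun ` ksubsets m l) :: (nat set \<Rightarrow> 'a) set)
      = fs.dim (tau_preimage D)
        + fs.dim {\<omega>' \<in> fs.span (unit_fun ` ksubsets m l). \<forall>\<omega>\<in>tau_preimage D. top_pairing m \<omega>' \<omega> = 0}"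
  proof (rule dim_annihilator[OF _ top_pairing_add_left top_pairing_fscale_left
        top_pairing_add_right top_pairing_fscale_right subspace_tau_preimage[OF assms(1)]])
    show "tau_preimage D \<subseteq> fs.span (unit_fun ` ksubsets m (m - l))"
      by (auto simp: span_units tau_preimage_def)
    fix \<omega> assume \<omega>: "\<omega> \<in> tau_preimage D" "\<forall>u\<in>unit_fun ` ksubsets m l. top_pairing m u \<omega> = 0"
    show "\<omega> = 0"
    proof (rule ext_pow_eq_0_if_pairings_vanish[OF l_le_m])
      show "\<omega> \<in> ext_pow m (m - l)" using \<omega>(1) by (simp add: tau_preimage_def)
      fix I assume "I \<in> ksubsets m l"
      then show "\<exists>a. (\<forall>K. K \<noteq> I \<longrightarrow> a K = 0) \<and> a I \<noteq> 0 \<and> top_pairing m a \<omega> = 0"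
        using \<omega>(2) by (intro exI[of _ "unit_fun I"]) (simp add: unit_fun_def)
    qed
  qed (simp_all add: finite_ksubsets)
  then have "fs.dim (ext_pow m l :: (nat set \<Rightarrow> 'a) set) = fs.dim D + fs.dim (annihilator D)"
    by (simp only: span_units annihilator_def dim_tau_preimage[OF assms])
  then show ?thesis by simp
qed

lemma rep_in_annihilator_iff:
  assumes "i < n" "D \<subseteq> tau m n rep ` ext_pow m (m - l)"
  shows "rep i \<in> annihilator D \<longleftrightarrow> (\<forall>x\<in>D. x i = 0)"
proof -
  have "rep i \<in> annihilator D \<longleftrightarrow> (\<forall>\<omega>\<in>tau_preimage D. tau m n rep \<omega> i = 0)"
    using rep_in_ext_pow[OF assms(1)] tau_component[OF assms(1)] by (simp add: annihilator_def)
  also have "\<dots> \<longleftrightarrow> (\<forall>x\<in>tau m n rep ` tau_preimage D. x i = 0)"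
    by simp
  also have "\<dots> \<longleftrightarrow> (\<forall>x\<in>D. x i = 0)"
    by (simp only: image_tau_preimage[OF assms(2)])
  finally show ?thesis .
qed

lemma supp_size_eq_card_annihilator:
  assumes "D \<subseteq> tau m n rep ` ext_pow m (m - l)"
  shows "supp_size n D = n - card (annihilator D \<inter> rep ` {..<n})"
proof -
  let ?Z = "{i \<in> {..<n}. rep i \<in> annihilator D}"
  have "{i \<in> {..<n}. \<exists>x\<in>D. x i \<noteq> 0} = {..<n} - ?Z"
    using rep_in_annihilator_iff[OF _ assms] by auto
  moreover have "annihilator D \<inter> rep ` {..<n} = rep ` ?Z" by auto
  moreover have "card (rep ` ?Z) = card ?Z"
    by (rule card_image[OF inj_on_subset[OF inj_on_rep]]) auto
  moreover have "card ({..<n} - ?Z) = n - card ?Z" by (subst card_Diff_subset) auto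
  ultimately show ?thesis unfolding supp_size_def by simp
qed

end

theorem lemma5p1:
  fixes m l n :: nat
    and W :: "nat \<Rightarrow> (nat \<Rightarrow> 'a::{finite,field}) set"
    and bas :: "nat \<Rightarrow> (nat \<Rightarrow> 'a) list"
    and D :: "(nat \<Rightarrow> 'a) set"
  assumes "1 \<le> l" and "l \<le> m"
    and "bij_betw W {..<n}
           {S. S \<subseteq> Vsp m \<and> module.subspace fscale S \<and> vector_space.dim fscale S = l}"
    and "\<forall>i<n. length (bas i) = l \<and> distinct (bas i) \<and> set (bas i) \<subseteq> W i
               \<and> \<not> module.dependent fscale (set (bas i))
               \<and> module.span fscale (set (bas i)) = W i"
    and "module.subspace fscale D"
    and "D \<subseteq> tau m n (\<lambda>i. wedge_list (bas i)) ` ext_pow m (m - l)"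
  shows "let rep = (\<lambda>i. wedge_list (bas i));
             T = rep ` {..<n};
             \<D> = {\<omega> \<in> ext_pow m (m - l). tau m n rep \<omega> \<in> D};
             \<E> = {\<omega>' \<in> ext_pow m l. \<forall>\<omega>\<in>\<D>. top_coeff m (wedge \<omega>' \<omega>) = 0}
         in module.subspace fscale \<E> \<and> \<E> \<subseteq> ext_pow m l
            \<and> vector_space.dim fscale (ext_pow m l :: (nat set \<Rightarrow> 'a) set) - vector_space.dim fscale \<E>
                = vector_space.dim fscale D
            \<and> supp_size n D = n - card (\<E> \<inter> T)"
proof -
  interpret plucker_representatives m l n W bas
    using assms(2-4) by unfold_locales auto
  have rep: "(\<lambda>i. wedge_list (bas i)) = rep" by (simp add: rep_def fun_eq_iff)
  have E: "{\<omega>' \<in> ext_pow m l. \<forall>\<omega>\<in>{\<omega> \<in> ext_pow m (m - l). tau m n rep \<omega> \<in> D}.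
      top_coeff m (wedge \<omega>' \<omega>) = 0} = annihilator D"
    by (simp add: annihilator_def tau_preimage_def top_pairing_def)
  have D: "D \<subseteq> tau m n rep ` ext_pow m (m - l)" using assms(6) by (simp add: rep)
  show ?thesis
    unfolding Let_def rep E
    using subspace_annihilator codim_annihilator[OF assms(5) D] supp_size_eq_card_annihilator[OF D]
    by (simp add: annihilator_def)
qed

end
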